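(* Consider the $k$-agent prophet game with random tie-breaking, and assume $n\ge k$. In every Nash equilibrium $S$ of the game, the expected social welfare satisfies $$\sum_{i=1}^k u_i(S)\ \ge\ \frac12\,\mathbb{E}\Big[\sum_{j=1}^{k}y_j\Big].$$
   Context: Prophet game with competing agents: there are $n$ rewards $v_1,\ldots,v_n$, where $v_t$ is a non-negative real random variable drawn from a known distribution $F_t$ (with finite mean), independently across $t$. There are $k$ agents. At each time $t=1,\ldots,n$, the value $v_t$ is revealed to all agents, and every active agent (an agent who has not yet received a reward) decides whether to select $v_t$. If exactly one agent selects $v_t$, it is assigned to that agent. If several agents select it, it is assigned to one of them by the tie-breaking rule. Under random tie-breaking, the reward goes to a uniformly random agent among those selecting it. An agent who receives a reward becomes inactive, and unselected rewards are lost forever. A strategy of an agent is a (possibly randomized) rule that, for each $t$, decides whether to select $v_t$ based on $t$, the realized value $v_t$, and the set of currently active agents. The utility $u_i(S)$ of agent $i$ under strategy profile $S=(S_i,S_{-i})$ is her expected received reward (zero if she receives none). A strategy profile $S$ is a Nash equilibrium if for every agent $i$ and every strategy $S_i'$, $u_i(S_i',S_{-i})\le u_i(S)$. For $j=1,\ldots,n$, $y_j$ denotes the $j$-th largest value among $v_1,\ldots,v_n$. *)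

theory Defs
  imports "HOL-Probability.Probability"
begin

text \<open>
Times are 0,...,n-1 (time t carries value v_t with distribution F t).
Agents are 0,...,k-1. A (behavioural, randomized) strategy of an agent is a
function s t v A in [0,1]: the probability of selecting v_t = v at time t when
A is the set of currently active agents. Agents randomize independently.
\<close>

type_synonym strategy = "nat \<Rightarrow> real \<Rightarrow> nat set \<Rightarrow> real"
type_synonym profile = "nat \<Rightarrow> strategy"

definition valid_strategy :: "strategy \<Rightarrow> bool" where
  "valid_strategy s \<longleftrightarrow>
     (\<forall>t v A. 0 \<le> s t v A \<and> s t v A \<le> 1) \<and>
     (\<forall>t A. (\<lambda>v. s t v A) \<in> borel_measurable borel)"

definition sel_prob :: "profile \<Rightarrow> nat \<Rightarrow> real \<Rightarrow> nat set \<Rightarrow> nat set \<Rightarrow> real" where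
  "sel_prob S t v A T =
     (\<Prod>j\<in>T. S j t v A) * (\<Prod>j\<in>A - T. 1 - S j t v A)"

text \<open>cont F S n i r A: expected reward agent i obtains during the last r steps
(times n-r,...,n-1) when A is the set of active agents at time n-r.\<close>
primrec cont :: "(nat \<Rightarrow> real measure) \<Rightarrow> profile \<Rightarrow> nat \<Rightarrow> nat \<Rightarrow> nat \<Rightarrow> nat set \<Rightarrow> real" where
  "cont F S n i 0 A = 0"
| "cont F S n i (Suc r) A =
     (if i \<notin> A then 0 else
      \<integral>v. (\<Sum>T\<in>Pow A. sel_prob S (n - Suc r) v A T *
              (if T = {} then cont F S n i r A
               else (1 / real (card T)) *
                    (\<Sum>w\<in>T. if w = i then v else cont F S n i r (A - {w}))))
        \<partial>(F (n - Suc r)))"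

definition utility :: "(nat \<Rightarrow> real measure) \<Rightarrow> nat \<Rightarrow> nat \<Rightarrow> profile \<Rightarrow> nat \<Rightarrow> real" where
  "utility F n k S i = cont F S n i n {..<k}"

definition nash_equilibrium :: "(nat \<Rightarrow> real measure) \<Rightarrow> nat \<Rightarrow> nat \<Rightarrow> profile \<Rightarrow> bool" where
  "nash_equilibrium F n k S \<longleftrightarrow>
     (\<forall>i<k. valid_strategy (S i)) \<and>
     (\<forall>i<k. \<forall>s'. valid_strategy s' \<longrightarrow> utility F n k (S(i := s')) i \<le> utility F n k S i)"

definition top_sum :: "nat \<Rightarrow> real list \<Rightarrow> real" where
  "top_sum k xs = sum_list (take k (rev (sort xs)))"

end

theory Submission
  imports Defs
begin

text \<open>
Let OPT be the expected sum of the k largest values, put \<open>\<tau> = OPT / (2k)\<close> and let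
\<open>\<Phi> = \<Sum>\<^sub>t E (v\<^sub>t - \<tau>)\<^sup>+\<close>.
Pointwise, the k largest values sum to at most \<open>k\<tau> + \<Sum>\<^sub>t (v\<^sub>t - \<tau>)\<^sup>+\<close>, so
OPT \<open>\<le> k\<tau> + \<Phi>\<close>, hence \<open>k\<tau> = OPT / 2 \<le> \<Phi>\<close>.
Now let one agent deviate to the threshold strategy "select \<open>v\<^sub>t\<close> iff \<open>v\<^sub>t \<ge> \<tau>\<close>",
the others playing arbitrarily. If her continuation values are all at least some \<open>m \<le> \<tau>\<close>,
then at a time with \<open>v\<^sub>t < \<tau>\<close> she keeps at least m, while at a time with
\<open>v\<^sub>t \<ge> \<tau>\<close> she selects and wins \<open>v\<^sub>t\<close> with probability at least 1/k, so her
expected value exceeds m by at least \<open>(v\<^sub>t - \<tau>) / k\<close>. Backward induction over the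
remaining steps gives her at least \<open>min \<tau> (\<Phi> / k) = \<tau>\<close>. At a Nash equilibrium every agent thus earns at least \<open>\<tau>\<close>,
and the welfare is at least \<open>k\<tau> = OPT / 2\<close>.
\<close>

lemma sum_list_take_le_threshold:
  fixes xs :: "real list" and \<tau> :: real
  assumes "0 \<le> \<tau>"
  shows "sum_list (take k xs) \<le> real k * \<tau> + (\<Sum>x\<leftarrow>xs. max (x - \<tau>) 0)"
proof (induction xs arbitrary: k)
  case Nil
  show ?case using assms by simp
next
  case (Cons x xs)
  have rest: "0 \<le> (\<Sum>x\<leftarrow>xs. max (x - \<tau>) 0)"
    by (rule sum_list_nonneg) auto
  show ?case
  proof (cases k)
    case 0
    then show ?thesis using rest by simp
  next
    case (Suc k')
    have "x \<le> \<tau> + max (x - \<tau>) 0" by simp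
    then show ?thesis using Cons.IH[of k'] by (simp add: Suc algebra_simps)
  qed
qed

lemma top_sum_le_threshold:
  fixes xs :: "real list" and \<tau> :: real
  assumes "0 \<le> \<tau>"
  shows "top_sum k xs \<le> real k * \<tau> + (\<Sum>x\<leftarrow>xs. max (x - \<tau>) 0)"
proof -
  let ?f = "\<lambda>x. max (x - \<tau>) 0"
  have "(\<Sum>x\<leftarrow>rev (sort xs). ?f x) = sum_mset (image_mset ?f (mset (rev (sort xs))))"
    by (simp flip: sum_mset_sum_list)
  also have "\<dots> = (\<Sum>x\<leftarrow>xs. ?f x)"
    by (simp flip: sum_mset_sum_list)
  finally have "(\<Sum>x\<leftarrow>rev (sort xs). ?f x) = (\<Sum>x\<leftarrow>xs. ?f x)" .
  then show ?thesis
    using sum_list_take_le_threshold[OF assms, of k "rev (sort xs)"] by (simp add: top_sum_def)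
qed

definition mean_excess :: "real measure \<Rightarrow> real \<Rightarrow> real" where
  "mean_excess M \<tau> = (\<integral>v. max (v - \<tau>) 0 \<partial>M)"

lemma mean_excess_nonneg: "0 \<le> mean_excess M \<tau>"
  unfolding mean_excess_def by (rule Bochner_Integration.integral_nonneg) auto

lemma integrable_max_diff:
  fixes \<tau> :: real
  assumes "sets M = sets borel" "integrable M (\<lambda>v. v)" "0 \<le> \<tau>"
  shows "integrable M (\<lambda>v. max (v - \<tau>) 0)"
proof (rule Bochner_Integration.integrable_bound[of _ "\<lambda>v. \<bar>v\<bar>"])
  show "integrable M (\<lambda>v. \<bar>v\<bar>)"
    using assms(2) by auto
  show "AE v in M. norm (max (v - \<tau>) 0) \<le> norm \<bar>v\<bar>"
    using assms(3) by auto
  show "(\<lambda>v. max (v - \<tau>) 0) \<in> borel_measurable M"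
    by (simp add: measurable_cong_sets[OF assms(1) refl])
qed

lemma
  assumes "\<And>j. j \<in> I \<Longrightarrow> prob_space (M j)" "i \<in> I" "f \<in> borel_measurable (M i)"
  shows integrable_PiM_component_iff:
      "integrable (PiM I M) (\<lambda>\<omega>. f (\<omega> i)) \<longleftrightarrow> integrable (M i) (f :: _ \<Rightarrow> real)"
    and integral_PiM_component: "(\<integral>\<omega>. f (\<omega> i) \<partial>PiM I M) = integral\<^sup>L (M i) f"
proof -
  have meas: "(\<lambda>\<omega>. \<omega> i) \<in> measurable (PiM I M) (M i)"
    using assms(2) by (rule measurable_component_singleton)
  have distr: "distr (PiM I M) (M i) (\<lambda>\<omega>. \<omega> i) = M i"
    using assms(1,2) by (rule distr_PiM_component)
  show "integrable (PiM I M) (\<lambda>\<omega>. f (\<omega> i)) \<longleftrightarrow> integrable (M i) f"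
    using integrable_distr_eq[OF meas assms(3)] by (simp add: distr)
  show "(\<integral>\<omega>. f (\<omega> i) \<partial>PiM I M) = integral\<^sup>L (M i) f"
    using integral_distr[OF meas assms(3)] by (simp add: distr)
qed

lemma expected_top_sum_le_threshold:
  fixes F :: "nat \<Rightarrow> real measure" and \<tau> :: real
  assumes prob: "\<And>t. t < n \<Longrightarrow> prob_space (F t)"
    and sets: "\<And>t. t < n \<Longrightarrow> sets (F t) = sets borel"
    and integ: "\<And>t. t < n \<Longrightarrow> integrable (F t) (\<lambda>v. v)"
    and "0 \<le> \<tau>"
  shows "(\<integral>\<omega>. top_sum k (map \<omega> [0..<n]) \<partial>PiM {..<n} F)
           \<le> real k * \<tau> + (\<Sum>t<n. mean_excess (F t) \<tau>)"
proof -
  let ?M = "PiM {..<n} F"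
  interpret M: prob_space ?M
    by (rule prob_space_PiM) (use prob in auto)
  define R where "R \<omega> = real k * \<tau> + (\<Sum>t<n. max (\<omega> t - \<tau>) 0)" for \<omega> :: "nat \<Rightarrow> real"
  have meas: "(\<lambda>v. max (v - \<tau>) 0) \<in> borel_measurable (F t)" if "t < n" for t
    by (simp add: measurable_cong_sets[OF sets[OF that] refl])
  have component: "integrable ?M (\<lambda>\<omega>. max (\<omega> t - \<tau>) 0)"
      "(\<integral>\<omega>. max (\<omega> t - \<tau>) 0 \<partial>?M) = mean_excess (F t) \<tau>" if "t < n" for t
    using integrable_PiM_component_iff[of "{..<n}" F t, OF prob _ meas[OF that]]
      integral_PiM_component[of "{..<n}" F t, OF prob _ meas[OF that]]
      integrable_max_diff[OF sets[OF that] integ[OF that] \<open>0 \<le> \<tau>\<close>] that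
    by (simp_all add: mean_excess_def)
  have sum_integrable: "integrable ?M (\<lambda>\<omega>. \<Sum>t<n. max (\<omega> t - \<tau>) 0)"
    using component(1) by (intro Bochner_Integration.integrable_sum) auto
  then have R_integrable: "integrable ?M R"
    unfolding R_def by simp
  have R_integral: "(\<integral>\<omega>. R \<omega> \<partial>?M) = real k * \<tau> + (\<Sum>t<n. mean_excess (F t) \<tau>)"
    unfolding R_def using sum_integrable component
    by (simp add: Bochner_Integration.integral_add Bochner_Integration.integral_sum M.prob_space)
  have top_sum_le_R: "top_sum k (map \<omega> [0..<n]) \<le> R \<omega>" for \<omega>
    using top_sum_le_threshold[OF \<open>0 \<le> \<tau>\<close>, of k "map \<omega> [0..<n]"]
    by (simp add: R_def interv_sum_list_conv_sum_set_nat atLeast0LessThan comp_def)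
  show ?thesis
  proof (cases "integrable ?M (\<lambda>\<omega>. top_sum k (map \<omega> [0..<n]))")
    case True
    then have "(\<integral>\<omega>. top_sum k (map \<omega> [0..<n]) \<partial>?M) \<le> (\<integral>\<omega>. R \<omega> \<partial>?M)"
      using R_integrable top_sum_le_R by (intro integral_mono)
    then show ?thesis
      unfolding R_integral .
  next
    case False
    then show ?thesis
      using \<open>0 \<le> \<tau>\<close> by (simp add: not_integrable_integral_eq sum_nonneg mean_excess_nonneg)
  qed
qed

lemma integrable_mult_bounded:
  fixes f g :: "'a \<Rightarrow> real"
  assumes "integrable M f" "g \<in> borel_measurable M" "\<And>x. \<bar>g x\<bar> \<le> 1"
  shows "integrable M (\<lambda>x. g x * f x)"
proof (rule Bochner_Integration.integrable_bound[OF assms(1)])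
  show "(\<lambda>x. g x * f x) \<in> borel_measurable M"
    using assms(1,2) by measurable
  show "AE x in M. norm (g x * f x) \<le> norm (f x)"
    by (intro AE_I2) (simp add: abs_mult mult_left_le_one_le assms(3))
qed

lemma sum_sel_prob:
  assumes "finite A"
  shows "(\<Sum>T\<in>Pow A. sel_prob S t v A T) = 1"
proof -
  have "(\<Sum>T\<in>Pow A. sel_prob S t v A T) = (\<Prod>j\<in>A. S j t v A + (1 - S j t v A))"
    unfolding sel_prob_def by (rule prod_add[OF assms, symmetric])
  then show ?thesis by simp
qed

lemma sel_prob_nonneg:
  assumes "\<And>j. j \<in> A \<Longrightarrow> 0 \<le> S j t v A \<and> S j t v A \<le> 1" "T \<subseteq> A"
  shows "0 \<le> sel_prob S t v A T"
  using assms unfolding sel_prob_def by (force intro!: mult_nonneg_nonneg prod_nonneg)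

lemma abs_sel_prob_le_1:
  assumes "\<And>j. j \<in> A \<Longrightarrow> 0 \<le> S j t v A \<and> S j t v A \<le> 1" "T \<subseteq> A"
  shows "\<bar>sel_prob S t v A T\<bar> \<le> 1"
proof -
  have "(\<Prod>j\<in>T. S j t v A) \<le> 1" "(\<Prod>j\<in>A - T. 1 - S j t v A) \<le> 1"
    using assms by (force intro!: prod_le_1)+
  moreover have "0 \<le> (\<Prod>j\<in>T. S j t v A)" "0 \<le> (\<Prod>j\<in>A - T. 1 - S j t v A)"
    using assms by (force intro!: prod_nonneg)+
  ultimately show ?thesis
    unfolding sel_prob_def by (simp add: abs_mult mult_le_one)
qed

lemma sel_prob_eq_0_if_selected:
  "i \<in> T \<Longrightarrow> finite T \<Longrightarrow> S i t v A = 0 \<Longrightarrow> sel_prob S t v A T = 0"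
  by (auto simp: sel_prob_def prod_zero)

lemma sel_prob_eq_0_if_not_selected:
  "i \<in> A - T \<Longrightarrow> finite A \<Longrightarrow> S i t v A = 1 \<Longrightarrow> sel_prob S t v A T = 0"
  by (auto simp: sel_prob_def intro!: prod_zero)

lemma borel_measurable_sel_prob:
  assumes "\<And>j. j \<in> A \<Longrightarrow> (\<lambda>v. S j t v A) \<in> borel_measurable M" "T \<subseteq> A"
  shows "(\<lambda>v. sel_prob S t v A T) \<in> borel_measurable M"
  unfolding sel_prob_def using assms
  by (intro borel_measurable_times borel_measurable_prod borel_measurable_diff) auto

definition tie_payoff :: "nat \<Rightarrow> real \<Rightarrow> real \<Rightarrow> (nat \<Rightarrow> real) \<Rightarrow> nat set \<Rightarrow> real" where
  "tie_payoff i v c0 c T =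
     (if T = {} then c0 else (1 / real (card T)) * (\<Sum>w\<in>T. if w = i then v else c w))"

lemma cont_Suc_eq_integral:
  "i \<in> A \<Longrightarrow> cont F S n i (Suc r) A =
     (\<integral>v. (\<Sum>T\<in>Pow A. sel_prob S (n - Suc r) v A T *
             tie_payoff i v (cont F S n i r A) (\<lambda>w. cont F S n i r (A - {w})) T) \<partial>F (n - Suc r))"
  by (simp add: tie_payoff_def)

lemma tie_payoff_ge_if_not_selected:
  assumes "i \<notin> T" "finite T" "m \<le> c0" "\<And>w. w \<in> T \<Longrightarrow> m \<le> c w"
  shows "m \<le> tie_payoff i v c0 c T"
proof (cases "T = {}")
  case False
  then have "0 < real (card T)"
    using assms(2) by (simp add: card_gt_0_iff)
  moreover have "real (card T) * m \<le> (\<Sum>w\<in>T. if w = i then v else c w)"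
    using assms(1,4) by (intro sum_bounded_below) auto
  ultimately show ?thesis
    using False by (simp add: tie_payoff_def field_simps)
qed (use assms(3) in \<open>simp add: tie_payoff_def\<close>)

lemma tie_payoff_ge_if_selected:
  assumes "i \<in> T" "finite T" "\<And>w. w \<in> T \<Longrightarrow> w \<noteq> i \<Longrightarrow> m \<le> c w"
  shows "m + (v - m) / real (card T) \<le> tie_payoff i v c0 c T"
proof -
  have "0 < card T"
    using assms(1,2) by (auto simp: card_gt_0_iff)
  then have card: "real (card (T - {i})) = real (card T) - 1" "0 < real (card T)"
    using assms(1,2) by (auto simp: of_nat_diff)
  have "(real (card T) - 1) * m \<le> (\<Sum>w\<in>T - {i}. if w = i then v else c w)"
    unfolding card(1)[symmetric] using assms(3) by (intro sum_bounded_below) auto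
  then have "v + (real (card T) - 1) * m \<le> (\<Sum>w\<in>T. if w = i then v else c w)"
    using assms(1,2) by (simp add: sum.remove)
  then show ?thesis
    using assms(1) card(2) by (auto simp: tie_payoff_def field_simps)
qed

lemma weighted_average_ge:
  fixes P f :: "'a \<Rightarrow> real"
  assumes "\<And>x. x \<in> I \<Longrightarrow> 0 \<le> P x" "sum P I = 1"
    and "\<And>x. x \<in> I \<Longrightarrow> P x \<noteq> 0 \<Longrightarrow> L \<le> f x"
  shows "L \<le> (\<Sum>x\<in>I. P x * f x)"
proof -
  have "L = (\<Sum>x\<in>I. P x * L)"
    using assms(2) by (simp flip: sum_distrib_right)
  also have "\<dots> \<le> (\<Sum>x\<in>I. P x * f x)"
    using assms(1,3) by (intro sum_mono) (metis mult_left_mono mult_zero_left order_refl)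
  finally show ?thesis .
qed

definition threshold_strategy :: "real \<Rightarrow> strategy" where
  "threshold_strategy \<tau> = (\<lambda>t v A. if \<tau> \<le> v then 1 else 0)"

lemma valid_threshold_strategy: "valid_strategy (threshold_strategy \<tau>)"
  by (simp add: valid_strategy_def threshold_strategy_def)

lemma stage_payoff_threshold_ge:
  fixes S :: profile and m \<tau> v c0 :: real
  assumes "finite A" "i \<in> A" "card A \<le> k" "m \<le> \<tau>"
    and "\<And>j. j \<in> A \<Longrightarrow> 0 \<le> S j t v A \<and> S j t v A \<le> 1"
    and "S i t v A = threshold_strategy \<tau> t v A"
    and "m \<le> c0" "\<And>w. w \<in> A \<Longrightarrow> w \<noteq> i \<Longrightarrow> m \<le> c w"
  shows "m + max (v - \<tau>) 0 / real k \<le> (\<Sum>T\<in>Pow A. sel_prob S t v A T * tie_payoff i v c0 c T)"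
proof (rule weighted_average_ge)
  show "0 \<le> sel_prob S t v A T" if "T \<in> Pow A" for T
    using assms(5) that by (intro sel_prob_nonneg) auto
  show "sum (sel_prob S t v A) (Pow A) = 1"
    using assms(1) by (rule sum_sel_prob)
  fix T assume T: "T \<in> Pow A" and pos: "sel_prob S t v A T \<noteq> 0"
  have finT: "finite T" using T assms(1) finite_subset by auto
  show "m + max (v - \<tau>) 0 / real k \<le> tie_payoff i v c0 c T"
  proof (cases "\<tau> \<le> v")
    case True
    then have "i \<in> T"
      using pos assms(1,2,6) sel_prob_eq_0_if_not_selected by (force simp: threshold_strategy_def)
    then have card: "0 < real (card T)" "real (card T) \<le> real k"
      using T finT assms(1,3) card_mono[of A T] by (auto simp: card_gt_0_iff)
    have "(v - \<tau>) / real k \<le> (v - m) / real (card T)"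
      using True assms(4) card by (intro frac_le) auto
    moreover have "m + (v - m) / real (card T) \<le> tie_payoff i v c0 c T"
      using \<open>i \<in> T\<close> finT T assms(8) by (intro tie_payoff_ge_if_selected) auto
    ultimately show ?thesis
      using True by simp
  next
    case False
    then have "i \<notin> T"
      using pos finT assms(6) sel_prob_eq_0_if_selected by (force simp: threshold_strategy_def)
    then have "m \<le> tie_payoff i v c0 c T"
      using finT T assms(7,8) by (intro tie_payoff_ge_if_not_selected) auto
    then show ?thesis
      using False by simp
  qed
qed

lemma integrable_stage_payoff:
  fixes S :: profile
  assumes "finite_measure M" "sets M = sets borel" "integrable M (\<lambda>v. v)" "finite A"
    and "\<And>j. j \<in> A \<Longrightarrow> (\<lambda>v. S j t v A) \<in> borel_measurable borel"
    and "\<And>j v. j \<in> A \<Longrightarrow> 0 \<le> S j t v A \<and> S j t v A \<le> 1"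
  shows "integrable M (\<lambda>v. \<Sum>T\<in>Pow A. sel_prob S t v A T * tie_payoff i v c0 c T)"
proof (intro Bochner_Integration.integrable_sum integrable_mult_bounded)
  fix T assume T: "T \<in> Pow A"
  interpret finite_measure M by (rule assms(1))
  show "integrable M (\<lambda>v. tie_payoff i v c0 c T)"
  proof (cases "T = {}")
    case False
    have "integrable M (\<lambda>v. if w = i then v else c w)" for w
      using assms(3) by (cases "w = i") auto
    then have "integrable M (\<lambda>v. \<Sum>w\<in>T. if w = i then v else c w)"
      by (intro Bochner_Integration.integrable_sum)
    then show ?thesis
      using False by (simp add: tie_payoff_def)
  qed (simp add: tie_payoff_def)
  show "(\<lambda>v. sel_prob S t v A T) \<in> borel_measurable M"
    using T assms(5) by (intro borel_measurable_sel_prob) (auto simp: measurable_cong_sets[OF assms(2) refl])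
  show "\<bar>sel_prob S t v A T\<bar> \<le> 1" for v
    using T assms(6) by (intro abs_sel_prob_le_1) auto
qed

lemma expected_stage_payoff_threshold_ge:
  fixes S :: profile and m \<tau> c0 :: real
  assumes "prob_space M" "sets M = sets borel" "integrable M (\<lambda>v. v)" "0 \<le> \<tau>"
    and "finite A" "i \<in> A" "card A \<le> k" "m \<le> \<tau>"
    and "\<And>j v. j \<in> A \<Longrightarrow> 0 \<le> S j t v A \<and> S j t v A \<le> 1"
    and "\<And>j. j \<in> A \<Longrightarrow> (\<lambda>v. S j t v A) \<in> borel_measurable borel"
    and "\<And>v. S i t v A = threshold_strategy \<tau> t v A"
    and "m \<le> c0" "\<And>w. w \<in> A \<Longrightarrow> w \<noteq> i \<Longrightarrow> m \<le> c w"
  shows "m + mean_excess M \<tau> / real k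
           \<le> (\<integral>v. (\<Sum>T\<in>Pow A. sel_prob S t v A T * tie_payoff i v c0 c T) \<partial>M)"
proof -
  interpret prob_space M by (rule assms(1))
  have excess: "integrable M (\<lambda>v. max (v - \<tau>) 0)"
    using assms(2-4) by (rule integrable_max_diff)
  have "m + mean_excess M \<tau> / real k = (\<integral>v. m + max (v - \<tau>) 0 / real k \<partial>M)"
    using excess by (simp add: mean_excess_def prob_space)
  also have "\<dots> \<le> (\<integral>v. (\<Sum>T\<in>Pow A. sel_prob S t v A T * tie_payoff i v c0 c T) \<partial>M)"
  proof (rule integral_mono)
    show "integrable M (\<lambda>v. m + max (v - \<tau>) 0 / real k)"
      using excess by simp
    show "integrable M (\<lambda>v. \<Sum>T\<in>Pow A. sel_prob S t v A T * tie_payoff i v c0 c T)"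
      using finite_measure assms(2,3,5) by (intro integrable_stage_payoff assms(9,10))
    show "m + max (v - \<tau>) 0 / real k \<le> (\<Sum>T\<in>Pow A. sel_prob S t v A T * tie_payoff i v c0 c T)"
      for v using assms(5-13) by (intro stage_payoff_threshold_ge) auto
  qed
  finally show ?thesis .
qed

lemma cont_threshold_ge:
  fixes F :: "nat \<Rightarrow> real measure" and S :: profile and \<tau> :: real
  assumes prob: "\<And>t. t < n \<Longrightarrow> prob_space (F t)"
    and sets: "\<And>t. t < n \<Longrightarrow> sets (F t) = sets borel"
    and integ: "\<And>t. t < n \<Longrightarrow> integrable (F t) (\<lambda>v. v)"
    and valid: "\<And>j. j < k \<Longrightarrow> valid_strategy (S j)"
    and threshold: "S i = threshold_strategy \<tau>" and "0 \<le> \<tau>"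
  shows "r \<le> n \<Longrightarrow> i \<in> A \<Longrightarrow> A \<subseteq> {..<k} \<Longrightarrow>
    min \<tau> ((\<Sum>j<r. mean_excess (F (n - Suc j)) \<tau>) / real k) \<le> cont F S n i r A"
proof (induction r arbitrary: A)
  case 0
  then show ?case using \<open>0 \<le> \<tau>\<close> by simp
next
  case (Suc r)
  define t where "t = n - Suc r"
  define m where "m = min \<tau> ((\<Sum>j<r. mean_excess (F (n - Suc j)) \<tau>) / real k)"
  have t: "t < n" using Suc.prems(1) by (simp add: t_def)
  have iA: "i \<in> A" and finA: "finite A" and cardA: "card A \<le> k"
    using Suc.prems(2,3) finite_subset[of A "{..<k}"] card_mono[of "{..<k}" A] by simp_all
  have IH: "m \<le> cont F S n i r A'" if "i \<in> A'" "A' \<subseteq> {..<k}" for A'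
    unfolding m_def using Suc.IH[OF _ that] Suc.prems(1) by simp
  have "m + mean_excess (F t) \<tau> / real k \<le> cont F S n i (Suc r) A"
    unfolding cont_Suc_eq_integral[OF iA] t_def[symmetric]
  proof (rule expected_stage_payoff_threshold_ge
      [OF prob[OF t] sets[OF t] integ[OF t] \<open>0 \<le> \<tau>\<close> finA iA cardA])
    show "0 \<le> S j t v A \<and> S j t v A \<le> 1" "(\<lambda>v. S j t v A) \<in> borel_measurable borel"
      if "j \<in> A" for j v
      using valid that Suc.prems(3) by (auto simp: valid_strategy_def)
    show "m \<le> cont F S n i r (A - {w})" if "w \<in> A" "w \<noteq> i" for w
      using that iA Suc.prems(3) by (intro IH) auto
    show "m \<le> cont F S n i r A"
      using iA Suc.prems(3) by (rule IH)
  qed (simp_all add: m_def threshold)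
  moreover have "0 \<le> mean_excess (F t) \<tau> / real k"
    by (simp add: mean_excess_nonneg)
  moreover have "(\<Sum>j<Suc r. mean_excess (F (n - Suc j)) \<tau>) / real k
      = (\<Sum>j<r. mean_excess (F (n - Suc j)) \<tau>) / real k + mean_excess (F t) \<tau> / real k"
    by (simp add: t_def add_divide_distrib)
  ultimately show ?case
    unfolding m_def by linarith
qed

lemma nash_equilibrium_utility_ge:
  fixes F :: "nat \<Rightarrow> real measure" and S :: profile and \<tau> :: real
  assumes "\<And>t. t < n \<Longrightarrow> prob_space (F t)"
    and "\<And>t. t < n \<Longrightarrow> sets (F t) = sets borel"
    and "\<And>t. t < n \<Longrightarrow> integrable (F t) (\<lambda>v. v)"
    and NE: "nash_equilibrium F n k S" and "i < k" "0 \<le> \<tau>"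
  shows "min \<tau> ((\<Sum>t<n. mean_excess (F t) \<tau>) / real k) \<le> utility F n k S i"
proof -
  let ?S' = "S(i := threshold_strategy \<tau>)"
  have valid: "valid_strategy (?S' j)" if "j < k" for j
    using NE that valid_threshold_strategy by (simp add: nash_equilibrium_def)
  have "min \<tau> ((\<Sum>t<n. mean_excess (F t) \<tau>) / real k)
      = min \<tau> ((\<Sum>j<n. mean_excess (F (n - Suc j)) \<tau>) / real k)"
    using sum.nat_diff_reindex[of "\<lambda>t. mean_excess (F t) \<tau>" n] by simp
  also have "\<dots> \<le> cont F ?S' n i n {..<k}"
    by (rule cont_threshold_ge[OF assms(1-3) valid]) (use assms(5,6) in auto)
  also have "\<dots> \<le> utility F n k S i"
    using NE \<open>i < k\<close> valid_threshold_strategy by (simp add: nash_equilibrium_def utility_def)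
  finally show ?thesis .
qed

theorem mainTheorem4:
  fixes F :: "nat \<Rightarrow> real measure" and n k :: nat and S :: profile
  assumes "\<And>t. t < n \<Longrightarrow> prob_space (F t)"
    and "\<And>t. t < n \<Longrightarrow> sets (F t) = sets borel"
    and "\<And>t. t < n \<Longrightarrow> AE v in F t. 0 \<le> v"
    and "\<And>t. t < n \<Longrightarrow> integrable (F t) (\<lambda>v. v)"
    and "k \<le> n"
    and "nash_equilibrium F n k S"
  shows "(\<Sum>i<k. utility F n k S i) \<ge>
           (1/2) * (\<integral>\<omega>. top_sum k (map \<omega> [0..<n]) \<partial>(PiM {..<n} F))"
proof (cases "k = 0")
  case False
  define OPT where "OPT = (\<integral>\<omega>. top_sum k (map \<omega> [0..<n]) \<partial>(PiM {..<n} F))"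
  define \<tau> where "\<tau> = max 0 OPT / (2 * real k)"
  define \<Phi> where "\<Phi> = (\<Sum>t<n. mean_excess (F t) \<tau>)"
  have "0 \<le> \<tau>" and two_k_tau: "2 * (real k * \<tau>) = max 0 OPT"
    using False by (simp_all add: \<tau>_def)
  have "OPT \<le> real k * \<tau> + \<Phi>"
    unfolding OPT_def \<Phi>_def by (rule expected_top_sum_le_threshold[OF assms(1,2,4) \<open>0 \<le> \<tau>\<close>])
  moreover have "0 \<le> \<Phi>"
    by (simp add: \<Phi>_def sum_nonneg mean_excess_nonneg)
  ultimately have "max 0 OPT \<le> real k * \<tau> + \<Phi>"
    using \<open>0 \<le> \<tau>\<close> by simp
  then have "real k * \<tau> \<le> \<Phi>"
    using two_k_tau by linarith
  then have "min \<tau> (\<Phi> / real k) = \<tau>"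
    using False by (simp add: pos_le_divide_eq mult.commute)
  then have "\<tau> \<le> utility F n k S i" if "i < k" for i
    using nash_equilibrium_utility_ge[OF assms(1,2,4,6) that \<open>0 \<le> \<tau>\<close>] by (simp add: \<Phi>_def)
  then have "real k * \<tau> \<le> (\<Sum>i<k. utility F n k S i)"
    using sum_bounded_below[of "{..<k}" \<tau> "utility F n k S"] by simp
  then show ?thesis
    using two_k_tau unfolding OPT_def by linarith
qed (simp add: top_sum_def)

end
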